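(* Let $d\ge1$, $G\in\mathrm{GL}_{1+d}(\mathbb{R})$, and let $g(\xi)=\boldsymbol{\pi}({}^tG\,\sigma(\xi))$ for $\xi\in\mathbb{R}^d$, $\|\xi\|<1$. Then in a neighbourhood of $\xi=0$, the differential $dg(\xi)$ (equivalently the mixed Hessian $\partial_{\tilde x}\partial_\xi\phi$ of the phase $\phi(\tilde x,\xi)=\langle\tilde x,g(\xi)\rangle_d+\langle\gamma,\sigma(\xi)\rangle$, $\gamma\in\mathbb{R}^{1+d}$) is non-degenerate if and only if the hyperplanes $P_0=\{0\}\times\mathbb{R}^d$ and $GP_0$ are not mutually perpendicular, i.e. if and only if $\langle e_0,G^{-1}e_0\rangle\neq 0$.
   Context: $\mathbb{R}^{1+d}$ has coordinates $(x_0,\dots,x_d)$, canonical basis $e_0,\dots,e_d$, Euclidean scalar product $\langle\cdot,\cdot\rangle$; $\langle\cdot,\cdot\rangle_d$ is the Euclidean scalar product on $\mathbb{R}^d$. $\sigma(\xi)=(\sqrt{1-\|\xi\|^2},\xi)$ for $\|\xi\|<1$. $\boldsymbol{\pi}:\mathbb{R}^{1+d}\to\mathbb{R}^d$ is the linear projection $(\xi_0,\xi_1,\dots,\xi_d)\mapsto(\xi_1,\dots,\xi_d)$. ${}^tG$ is the transpose of $G$. *)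

theory Defs
  imports "HOL-Analysis.Analysis"
begin

text \<open>R^{1+d} is modelled as real^('n option): index None is coordinate x_0,
  index Some j is coordinate x_j (j ranging over the d-element type 'n).\<close>

definition sigma :: "real^'n \<Rightarrow> real^('n option)" where
  "sigma \<xi> = (\<chi> i. case i of None \<Rightarrow> sqrt (1 - (norm \<xi>)\<^sup>2) | Some j \<Rightarrow> \<xi> $ j)"

definition proj :: "real^('n option) \<Rightarrow> real^'n" where
  "proj x = (\<chi> j. x $ Some j)"

definition gmap :: "real^('n option)^('n option) \<Rightarrow> real^'n \<Rightarrow> real^'n" where
  "gmap G \<xi> = proj (transpose G *v sigma \<xi>)"

definition e0 :: "real^('n::finite option)" where
  "e0 = axis None 1"

definition nondeg_diff :: "(real^'n \<Rightarrow> real^'n) \<Rightarrow> real^'n \<Rightarrow> bool" where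
  "nondeg_diff g \<xi> \<longleftrightarrow> (\<exists>D. (g has_derivative D) (at \<xi>) \<and> bij D)"

end

theory Submission imports Defs begin

text \<open>Write \<open>\<sigma>(\<xi>) = \<surd>(1 - \<bar>\<xi>\<bar>\<^sup>2) e\<^sub>0 + (0, \<xi>)\<close>. Then \<open>g\<close> is the linear map
  \<open>A h = \<pi>(\<^sup>tG (0, h))\<close> plus a multiple of a fixed vector, and the correction to \<open>A\<close> in
  \<open>dg(\<xi>)\<close> has operator norm \<open>O(\<bar>\<xi>\<bar>)\<close>. Hence \<open>dg\<close> is non-degenerate near \<open>0\<close> iff \<open>A = dg(0)\<close>
  is injective. A vector \<open>h\<close> lies in the kernel of \<open>A\<close> iff \<open>\<^sup>tG (0, h)\<close> is a multiple of \<open>e\<^sub>0\<close>,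
  i.e. iff \<open>(0, h)\<close> is a multiple of \<open>\<^sup>tG\<^sup>-\<^sup>1 e\<^sub>0\<close>; such a nonzero \<open>h\<close> exists iff the
  \<open>e\<^sub>0\<close>-coordinate \<open>\<langle>e\<^sub>0, G\<^sup>-\<^sup>1 e\<^sub>0\<rangle>\<close> of \<open>\<^sup>tG\<^sup>-\<^sup>1 e\<^sub>0\<close> vanishes.\<close>

lemma matrix_inv_left: "invertible A \<Longrightarrow> matrix_inv A ** A = mat 1"
  and matrix_inv_right: "invertible A \<Longrightarrow> A ** matrix_inv A = mat 1"
  unfolding invertible_def matrix_inv_def by (metis (mono_tags, lifting) someI_ex)+

lemma vector_matrix_eq_iff_matrix_inv:
  assumes "invertible A"
  shows "x v* A = y \<longleftrightarrow> x = y v* matrix_inv A"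
proof
  assume "x v* A = y"
  then have "y v* matrix_inv A = x v* (A ** matrix_inv A)"
    using vector_matrix_mul_assoc[of x A "matrix_inv A"] by simp
  then show "x = y v* matrix_inv A"
    by (simp add: matrix_inv_right[OF assms])
next
  assume "x = y v* matrix_inv A"
  then show "x v* A = y"
    by (simp add: vector_matrix_mul_assoc matrix_inv_left[OF assms])
qed

lemma nondeg_diff_iff_inj:
  assumes D: "(f has_derivative D) (at x)"
  shows "nondeg_diff f x \<longleftrightarrow> inj D"
proof
  assume "nondeg_diff f x"
  then obtain D' where "(f has_derivative D') (at x)" "bij D'"
    unfolding nondeg_diff_def by blast
  then show "inj D"
    using has_derivative_unique[OF D] bij_is_inj by blast
next
  assume "inj D"
  moreover have "surj D"
    using linear_injective_imp_surjective has_derivative_linear[OF D] \<open>inj D\<close> by blast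
  ultimately show "nondeg_diff f x"
    unfolding nondeg_diff_def bij_def using D by blast
qed

lemma inj_linear_perturbation:
  fixes A :: "'a::real_normed_vector \<Rightarrow> 'b::euclidean_space"
  assumes "linear A" "inj A"
  obtains m where "m > 0"
    "\<And>L k. linear L \<Longrightarrow> (\<And>x. norm (L x - A x) \<le> k * norm x) \<Longrightarrow> k < m \<Longrightarrow> inj L"
proof -
  obtain m where m: "m > 0" "\<And>x. m * norm x \<le> norm (A x)"
    using linear_inj_bounded_below_pos[OF assms] by blast
  have "inj L" if "linear L" and close: "\<And>x. norm (L x - A x) \<le> k * norm x" and "k < m" for L k
    unfolding linear_injective_0[OF \<open>linear L\<close>]
  proof (intro allI impI)
    fix x
    assume "L x = 0"
    then have "(m - k) * norm x \<le> 0"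
      using m(2)[of x] close[of x] by (simp add: left_diff_distrib)
    then show "x = 0"
      using \<open>k < m\<close> by (simp add: mult_le_0_iff)
  qed
  with m(1) that show ?thesis by blast
qed

definition embed_P0 :: "real^'n \<Rightarrow> real^('n option)" where
  "embed_P0 h = (\<chi> i. case i of None \<Rightarrow> 0 | Some j \<Rightarrow> h $ j)"

definition gmap_linear_part :: "real^('n option)^('n option) \<Rightarrow> real^'n \<Rightarrow> real^'n" where
  "gmap_linear_part G h = proj (embed_P0 h v* G)"

lemma embed_P0_None [simp]: "embed_P0 h $ None = 0"
  and embed_P0_Some [simp]: "embed_P0 h $ Some j = h $ j"
  by (simp_all add: embed_P0_def)

lemma proj_component [simp]: "proj x $ j = x $ Some j"
  by (simp add: proj_def)

lemma proj_embed_P0 [simp]: "proj (embed_P0 h) = h"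
  by (simp add: vec_eq_iff)

lemma e0_None [simp]: "e0 $ None = 1"
  and e0_Some [simp]: "e0 $ Some j = 0"
  by (simp_all add: e0_def axis_def)

lemma inner_e0_left: "e0 \<bullet> x = x $ None"
  unfolding e0_def by (subst inner_commute) (simp add: inner_axis)

lemma e0_vector_matrix_component: "(e0 v* M) $ j = M $ None $ j"
  by (simp add: e0_def vector_matrix_mult_def axis_def if_distrib[of "\<lambda>x. x * _"] cong: if_cong)

lemma matrix_vector_e0_component: "(M *v e0) $ i = M $ i $ None"
  by (simp add: e0_def matrix_vector_mult_def axis_def if_distrib[of "\<lambda>x. _ * x"] cong: if_cong)

lemma eq_embed_P0_proj: "x $ None = 0 \<Longrightarrow> x = embed_P0 (proj x)"
  by (simp add: vec_eq_iff split_option_all)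

lemma eq_scaleR_e0_iff_proj_eq_0: "x = (x $ None) *\<^sub>R e0 \<longleftrightarrow> proj x = 0"
  by (simp add: vec_eq_iff split_option_all)

lemma linear_embed_P0: "linear embed_P0"
  by (rule linearI) (auto simp: vec_eq_iff embed_P0_def split: option.splits)

lemma linear_proj: "linear proj"
  by (rule linearI) (auto simp: vec_eq_iff)

lemma linear_gmap_linear_part: "linear (gmap_linear_part G)"
  unfolding gmap_linear_part_def
  by (intro linear_compose[OF linear_compose[OF linear_embed_P0] linear_proj, unfolded o_def])
     (simp flip: transpose_matrix_vector)

lemma sigma_eq: "sigma \<xi> = sqrt (1 - (norm \<xi>)\<^sup>2) *\<^sub>R e0 + embed_P0 \<xi>"
  by (auto simp: vec_eq_iff sigma_def split: option.splits)

lemma gmap_eq: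
  "gmap G \<xi> = sqrt (1 - (norm \<xi>)\<^sup>2) *\<^sub>R proj (e0 v* G) + gmap_linear_part G \<xi>"
  by (simp add: gmap_def gmap_linear_part_def sigma_eq vector_matrix_left_distrib
      scaleR_vector_matrix_assoc vec_eq_iff)

lemma has_derivative_gmap:
  assumes "norm \<xi> < 1"
  shows "(gmap G has_derivative
           (\<lambda>h. (- (\<xi> \<bullet> h) / sqrt (1 - (norm \<xi>)\<^sup>2)) *\<^sub>R proj (e0 v* G) + gmap_linear_part G h))
         (at \<xi>)"
proof -
  have gmap: "gmap G = (\<lambda>x. sqrt (1 - x \<bullet> x) *\<^sub>R proj (e0 v* G) + gmap_linear_part G x)"
    by (simp add: fun_eq_iff gmap_eq power2_norm_eq_inner)
  have pos: "0 < 1 - \<xi> \<bullet> \<xi>"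
    using assms by (simp add: power2_norm_eq_inner[symmetric] abs_square_less_1)
  show ?thesis
    unfolding gmap
    by (rule derivative_eq_intros linear_imp_has_derivative[OF linear_gmap_linear_part] pos refl)+
       (simp add: fun_eq_iff power2_norm_eq_inner inner_commute field_simps)
qed

lemma eventually_nondeg_diff_gmap:
  fixes G :: "real^('n::finite option)^('n option)"
  assumes "inj (gmap_linear_part G)"
  shows "\<forall>\<^sub>F \<xi> in nhds 0. nondeg_diff (gmap G) \<xi>"
proof -
  define c where "c = proj (e0 v* G)"
  define k where "k \<xi> = norm \<xi> * norm c / sqrt (1 - (norm \<xi>)\<^sup>2)" for \<xi> :: "real^'n"
  obtain m where "m > 0" and m: "\<And>L k. linear L \<Longrightarrow>
      (\<And>x. norm (L x - gmap_linear_part G x) \<le> k * norm x) \<Longrightarrow> k < m \<Longrightarrow> inj L"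
    using inj_linear_perturbation[OF linear_gmap_linear_part assms] by blast
  have "(k \<longlongrightarrow> 0) (nhds 0)"
    unfolding k_def by (auto intro!: tendsto_eq_intros filterlim_ident)
  then have "\<forall>\<^sub>F \<xi> in nhds 0. k \<xi> < m"
    using \<open>m > 0\<close> by (rule order_tendstoD)
  moreover have "\<forall>\<^sub>F \<xi> in nhds 0. norm \<xi> < (1::real)"
    unfolding eventually_nhds_metric dist_norm by (intro exI[of _ 1]) simp
  ultimately have "\<forall>\<^sub>F \<xi> in nhds 0. k \<xi> < m \<and> norm \<xi> < 1"
    by (rule eventually_conj)
  then show ?thesis
  proof (rule eventually_mono)
    fix \<xi> :: "real^'n"
    assume small: "k \<xi> < m \<and> norm \<xi> < 1"
    define L where "L h = (- (\<xi> \<bullet> h) / sqrt (1 - (norm \<xi>)\<^sup>2)) *\<^sub>R c + gmap_linear_part G h" for h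
    have L: "(gmap G has_derivative L) (at \<xi>)"
      unfolding L_def c_def using small by (intro has_derivative_gmap) simp
    have s: "sqrt (1 - (norm \<xi>)\<^sup>2) > 0"
      using small by (simp add: abs_square_less_1)
    have "norm (L h - gmap_linear_part G h) \<le> k \<xi> * norm h" for h
    proof -
      have "norm (L h - gmap_linear_part G h) = norm c * \<bar>\<xi> \<bullet> h\<bar> / sqrt (1 - (norm \<xi>)\<^sup>2)"
        using s by (simp add: L_def)
      also have "\<dots> \<le> norm c * (norm \<xi> * norm h) / sqrt (1 - (norm \<xi>)\<^sup>2)"
        using s Cauchy_Schwarz_ineq2[of \<xi> h] by (intro divide_right_mono mult_left_mono) auto
      also have "\<dots> = k \<xi> * norm h"
        by (simp add: k_def)
      finally show ?thesis .
    qed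
    then have "inj L"
      using m has_derivative_linear[OF L] small by blast
    then show "nondeg_diff (gmap G) \<xi>"
      using nondeg_diff_iff_inj[OF L] by blast
  qed
qed

lemma nondeg_diff_gmap_0_iff: "nondeg_diff (gmap G) 0 \<longleftrightarrow> inj (gmap_linear_part G)"
proof -
  have "(gmap G has_derivative gmap_linear_part G) (at 0)"
    using has_derivative_gmap[of 0 G] by simp
  then show ?thesis by (rule nondeg_diff_iff_inj)
qed

lemma gmap_linear_part_eq_0_iff:
  assumes "invertible G"
  shows "gmap_linear_part G h = 0 \<longleftrightarrow> (\<exists>t. embed_P0 h = t *\<^sub>R (e0 v* matrix_inv G))"
proof -
  have "gmap_linear_part G h = 0 \<longleftrightarrow> (\<exists>t. embed_P0 h v* G = t *\<^sub>R e0)"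
    unfolding gmap_linear_part_def eq_scaleR_e0_iff_proj_eq_0[symmetric] by auto
  also have "\<dots> \<longleftrightarrow> (\<exists>t. embed_P0 h = t *\<^sub>R (e0 v* matrix_inv G))"
    by (simp add: vector_matrix_eq_iff_matrix_inv[OF assms] scaleR_vector_matrix_assoc)
  finally show ?thesis .
qed

lemma inj_gmap_linear_part_iff:
  fixes G :: "real^('n::finite option)^('n option)"
  assumes "invertible G"
  shows "inj (gmap_linear_part G) \<longleftrightarrow> matrix_inv G $ None $ None \<noteq> 0"
proof
  assume inj: "inj (gmap_linear_part G)"
  show "matrix_inv G $ None $ None \<noteq> 0"
  proof
    define u where "u = e0 v* matrix_inv G"
    assume "matrix_inv G $ None $ None = 0"
    then have u: "u = embed_P0 (proj u)"
      by (intro eq_embed_P0_proj) (simp add: u_def e0_vector_matrix_component)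
    then have "gmap_linear_part G (proj u) = 0"
      unfolding gmap_linear_part_eq_0_iff[OF assms] u_def by (intro exI[of _ 1]) simp
    then have "proj u = 0"
      using inj linear_injective_0[OF linear_gmap_linear_part] by blast
    then have "e0 v* matrix_inv G = 0"
      using u by (simp add: u_def linear_0[OF linear_embed_P0])
    then have "e0 = (0::real^('n option))"
      using vector_matrix_mul_assoc[of e0 "matrix_inv G" G] matrix_inv_left[OF assms] by simp
    then show False
      by (metis e0_None zero_index zero_neq_one)
  qed
next
  assume nonzero: "matrix_inv G $ None $ None \<noteq> 0"
  show "inj (gmap_linear_part G)"
    unfolding linear_injective_0[OF linear_gmap_linear_part]
  proof (intro allI impI)
    fix h
    assume "gmap_linear_part G h = 0"
    then obtain t where t: "embed_P0 h = t *\<^sub>R (e0 v* matrix_inv G)"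
      using gmap_linear_part_eq_0_iff[OF assms] by blast
    have "t * matrix_inv G $ None $ None = 0"
      using arg_cong[OF t, of "\<lambda>x. x $ None"] by (simp add: e0_vector_matrix_component)
    then have "embed_P0 h = 0"
      using t nonzero by simp
    then show "h = 0"
      using proj_embed_P0[of h] by (simp add: linear_0[OF linear_proj])
  qed
qed

theorem lemma5p4:
  fixes G :: "real^('n::finite option)^('n option)"
  assumes "invertible G"
  shows "(\<exists>e>0. \<forall>\<xi>::real^'n. norm \<xi> < e \<longrightarrow> nondeg_diff (gmap G) \<xi>)
         \<longleftrightarrow> e0 \<bullet> (matrix_inv G *v e0) \<noteq> 0"
proof -
  have "(\<exists>e>0. \<forall>\<xi>::real^'n. norm \<xi> < e \<longrightarrow> nondeg_diff (gmap G) \<xi>)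
        \<longleftrightarrow> (\<forall>\<^sub>F \<xi> in nhds 0. nondeg_diff (gmap G) \<xi>)"
    by (simp add: eventually_nhds_metric dist_norm)
  also have "\<dots> \<longleftrightarrow> inj (gmap_linear_part G)"
    using eventually_nondeg_diff_gmap eventually_nhds_x_imp_x nondeg_diff_gmap_0_iff by blast
  also have "\<dots> \<longleftrightarrow> e0 \<bullet> (matrix_inv G *v e0) \<noteq> 0"
    using inj_gmap_linear_part_iff[OF assms]
    by (simp add: inner_e0_left matrix_vector_e0_component)
  finally show ?thesis .
qed

end
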